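(* Let $\lambda\ge 2$ be an integer. For every $f\in\mathcal{F}_{1,1}$ and every $\epsilon\in(0,1)$ there is a ReLU network (whose topology may depend on $f$) using at most $\lambda$ distinct weight values whose output $f''$ satisfies $\sup_{x\in[0,1]}|f''(x)-f(x)|\le\epsilon$, and such that: (i) the depth is $\mathcal{O}\left(\lambda(\log\log(1/\epsilon))^{\frac{1}{\lambda-1}}+\log(1/\epsilon)\right)$; (ii) the number of weights is $\mathcal{O}\left(\lambda(\log\log(1/\epsilon))^{\frac{1}{\lambda-1}+1}+1/\epsilon\right)$; (iii) the number of bits needed to store the network is $\mathcal{O}\left(\log\lambda\left(\lambda(\log\log(1/\epsilon))^{\frac{1}{\lambda-1}+1}+1/\epsilon\right)\right)$.
   Context: A ReLU network is a feedforward network with activation $\sigma(x)=\max(0,x)$, one input unit here, hidden units and one output unit, where each unit connects only to units in the next layer; depth is the number of layers. The $\lambda$ distinct weight values may be any real numbers (nonlinear quantization); each weight is stored with $\log_2\lambda$ bits. $\mathcal{F}_{1,1}$ is the set of functions $f\in\mathscr{W}^{1,\infty}([0,1])$ with $\operatorname{ess\,sup}|f|\le1$ and $\operatorname{ess\,sup}|f'|\le 1$. All logarithms are base 2. *)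

theory Defs
  imports "HOL-Analysis.Analysis"
begin

text \<open>f belongs to W^{1,infinity}([0,1]) with ess sup |f| <= 1 and ess sup |f'| <= 1.
  We use the (absolutely) continuous representative: f is the indefinite integral of
  a weak derivative g with |g| <= 1 almost everywhere on [0,1], and |f| <= 1 on [0,1].\<close>

definition F11 :: "(real \<Rightarrow> real) \<Rightarrow> bool" where
  "F11 f \<longleftrightarrow>
     (\<forall>x\<in>{0..1}. \<bar>f x\<bar> \<le> 1) \<and>
     (\<exists>g. set_integrable lborel {0..1} g \<and>
          (AE t in lborel. t \<in> {0..1} \<longrightarrow> \<bar>g t\<bar> \<le> 1) \<and>
          (\<forall>x\<in>{0..1}. f x = f 0 + (LINT t:{0..x}|lborel. g t)))"

text \<open>A connection from input unit i to
  output unit j is present iff l_W j i = Some w (w its weight); a bias of unit j is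
  present iff l_b j = Some c. Absent connections/biases are not weights.\<close>

record relu_layer =
  l_in :: nat
  l_out :: nat
  l_W :: "nat \<Rightarrow> nat \<Rightarrow> real option"
  l_b :: "nat \<Rightarrow> real option"

type_synonym relu_net = "relu_layer list"

definition valid_net :: "relu_net \<Rightarrow> bool" where
  "valid_net N \<longleftrightarrow> N \<noteq> [] \<and> l_in (hd N) = 1 \<and> l_out (last N) = 1 \<and>
     (\<forall>k. Suc k < length N \<longrightarrow> l_out (N ! k) = l_in (N ! Suc k))"

definition layer_apply :: "relu_layer \<Rightarrow> (nat \<Rightarrow> real) \<Rightarrow> (nat \<Rightarrow> real)" where
  "layer_apply L v = (\<lambda>j. if j < l_out L then
      (\<Sum>i<l_in L. (case l_W L j i of None \<Rightarrow> 0 | Some w \<Rightarrow> w * v i))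
      + (case l_b L j of None \<Rightarrow> 0 | Some c \<Rightarrow> c) else 0)"

definition relu :: "real \<Rightarrow> real" where
  "relu x = max 0 x"

fun net_eval :: "relu_net \<Rightarrow> (nat \<Rightarrow> real) \<Rightarrow> (nat \<Rightarrow> real)" where
  "net_eval [] v = v"
| "net_eval [L] v = layer_apply L v"
| "net_eval (L # N) v = net_eval N (\<lambda>j. relu (layer_apply L v j))"

definition net_fun :: "relu_net \<Rightarrow> real \<Rightarrow> real" where
  "net_fun N x = net_eval N (\<lambda>i. if i = 0 then x else 0) 0"

definition depth :: "relu_net \<Rightarrow> nat" where
  "depth N = length N"

definition weight_pos :: "relu_net \<Rightarrow> (nat \<times> nat \<times> nat) set" where
  "weight_pos N = {(k, j, i). k < length N \<and> j < l_out (N ! k) \<and> i < l_in (N ! k) \<and>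
                               l_W (N ! k) j i \<noteq> None}"

definition bias_pos :: "relu_net \<Rightarrow> (nat \<times> nat) set" where
  "bias_pos N = {(k, j). k < length N \<and> j < l_out (N ! k) \<and> l_b (N ! k) j \<noteq> None}"

definition num_weights :: "relu_net \<Rightarrow> nat" where
  "num_weights N = card (weight_pos N) + card (bias_pos N)"

definition weight_values :: "relu_net \<Rightarrow> real set" where
  "weight_values N =
     {w. \<exists>k j i. (k, j, i) \<in> weight_pos N \<and> l_W (N ! k) j i = Some w} \<union>
     {c. \<exists>k j. (k, j) \<in> bias_pos N \<and> l_b (N ! k) j = Some c}"

definition storage_bits :: "nat \<Rightarrow> relu_net \<Rightarrow> real" where
  "storage_bits lam N = real (num_weights N) * log 2 (real lam)"

end

theory Submission
  imports Defs
begin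

text \<open>
  A 1-Lipschitz function is tracked within \<open>h = 1/n\<close> on the grid \<open>k h\<close> by a zigzag that
  starts near \<open>f 0\<close> and then moves up or down by \<open>h\<close> at each grid point. The zigzag has slopes
  \<open>\<plusminus>1\<close>, so it equals \<open>a + \<Sum>i<n. \<tau>\<^sub>i relu (x - i h)\<close> with \<open>\<tau>\<^sub>i \<in> {-2..2}\<close>, and it is within
  \<open>3 h\<close> of \<open>f\<close> on \<open>[0,1]\<close>. This relu sum is computed by a network whose only weights are
  \<open>1\<close> and \<open>-h\<close>: for \<open>n = 2\<^sup>m\<close> a binary tree of depth \<open>m\<close> produces all features
  \<open>relu (x - i h)\<close> from \<open>relu (x - (i + 2\<^sup>l) h) = relu (relu (x - i h) - h 2\<^sup>l)\<close>; the negative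
  part is multiplied by \<open>2\<^sup>m = 1/h\<close> through \<open>m\<close> doubling layers before it is scaled by \<open>-h\<close>,
  and the offset is \<open>a = 1 - h K\<close>, the binary digits of \<open>K\<close> being added during the doubling. With \<open>n \<approx> 8/\<epsilon>\<close> the network
  has depth \<open>O(log (1/\<epsilon>))\<close> and \<open>O(1/\<epsilon>)\<close> weights, and two weight values, which is within
  every bound of the theorem for all \<open>\<lambda> \<ge> 2\<close>.
\<close>

lemma F11_lipschitz:
  assumes "F11 f" "0 \<le> y" "y \<le> x" "x \<le> 1"
  shows "\<bar>f x - f y\<bar> \<le> x - y"
proof -
  obtain g where g_int: "set_integrable lborel {0..1} g"
    and g_bound: "AE t in lborel. t \<in> {0..1} \<longrightarrow> \<bar>g t\<bar> \<le> 1"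
    and f_eq: "\<forall>x\<in>{0..1}. f x = f 0 + (LINT t:{0..x}|lborel. g t)"
    using assms(1) unfolding F11_def by blast
  have int_0y: "set_integrable lborel {0..y} g"
    by (rule set_integrable_subset[OF g_int]) (use assms in auto)
  have int_yx: "set_integrable lborel {y<..x} g"
    by (rule set_integrable_subset[OF g_int]) (use assms in auto)
  have split: "{0..x} = {0..y} \<union> {y<..x}" using assms by auto
  have "(LINT t:{0..x}|lborel. g t) = (LINT t:{0..y}|lborel. g t) + (LINT t:{y<..x}|lborel. g t)"
    unfolding split by (rule set_integral_Un[OF _ int_0y int_yx]) auto
  moreover have "f x = f 0 + (LINT t:{0..x}|lborel. g t)" "f y = f 0 + (LINT t:{0..y}|lborel. g t)"
    using bspec[OF f_eq, of x] bspec[OF f_eq, of y] assms by auto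
  ultimately have diff: "f x - f y = (LINT t:{y<..x}|lborel. g t)"
    by linarith
  have const_int: "set_integrable lborel {y<..x} (\<lambda>t. c)" for c :: real
  proof -
    have "integrable lborel (\<lambda>t. indicator {y<..x} t *\<^sub>R c)"
      by (rule integrable_indicator) (use assms in \<open>auto simp: ennreal_less_top\<close>)
    then show ?thesis unfolding set_integrable_def by simp
  qed
  have bound_yx: "AE t in lborel. t \<in> {y<..x} \<longrightarrow> \<bar>g t\<bar> \<le> 1"
    using g_bound by (rule eventually_mono) (use assms in auto)
  have "(LINT t:{y<..x}|lborel. g t) \<le> (LINT t:{y<..x}|lborel. (1::real))"
    by (rule set_integral_mono_AE[OF int_yx const_int]) (use bound_yx in \<open>auto elim!: eventually_mono\<close>)
  moreover have "(LINT t:{y<..x}|lborel. (-1::real)) \<le> (LINT t:{y<..x}|lborel. g t)"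
    by (rule set_integral_mono_AE[OF const_int int_yx]) (use bound_yx in \<open>auto elim!: eventually_mono\<close>)
  moreover have "(LINT t:{y<..x}|lborel. (c::real)) = c * (x - y)" for c
    using set_integral_const[of "{y<..x}" lborel c] assms by (simp add: mult.commute)
  ultimately show ?thesis using diff by (metis abs_le_iff minus_le_iff mult_1 mult_minus1)
qed

fun zigzag :: "(real \<Rightarrow> real) \<Rightarrow> real \<Rightarrow> real \<Rightarrow> nat \<Rightarrow> real" where
  "zigzag f h a 0 = a"
| "zigzag f h a (Suc k) =
     (if zigzag f h a k \<le> f (real (Suc k) * h) then zigzag f h a k + h else zigzag f h a k - h)"

definition zigzag_slope :: "(real \<Rightarrow> real) \<Rightarrow> real \<Rightarrow> real \<Rightarrow> nat \<Rightarrow> int" where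
  "zigzag_slope f h a k = (if zigzag f h a k \<le> f (real (Suc k) * h) then 1 else -1)"

definition zigzag_kink :: "(real \<Rightarrow> real) \<Rightarrow> real \<Rightarrow> real \<Rightarrow> nat \<Rightarrow> int" where
  "zigzag_kink f h a k =
     (if k = 0 then zigzag_slope f h a 0 else zigzag_slope f h a k - zigzag_slope f h a (k - 1))"

definition relu_sum :: "(nat \<Rightarrow> int) \<Rightarrow> real \<Rightarrow> nat \<Rightarrow> real \<Rightarrow> real" where
  "relu_sum t h n x = (\<Sum>i<n. of_int (t i) * relu (x - real i * h))"

lemma zigzag_Suc_slope: "zigzag f h a (Suc k) = zigzag f h a k + of_int (zigzag_slope f h a k) * h"
  by (simp add: zigzag_slope_def)

lemma zigzag_kink_range: "zigzag_kink f h a k \<in> {-2, -1, 0, 1, 2}"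
  by (auto simp: zigzag_kink_def zigzag_slope_def)

lemma zigzag_close_on_grid:
  assumes lip: "\<And>x y. 0 \<le> y \<Longrightarrow> y \<le> x \<Longrightarrow> x \<le> 1 \<Longrightarrow> \<bar>f x - f y\<bar> \<le> x - y"
    and h: "0 < h" and start: "\<bar>a - f 0\<bar> \<le> h"
  shows "real k * h \<le> 1 \<Longrightarrow> \<bar>zigzag f h a k - f (real k * h)\<bar> \<le> h"
proof (induction k)
  case 0
  then show ?case using start by simp
next
  case (Suc k)
  have "\<bar>f (real (Suc k) * h) - f (real k * h)\<bar> \<le> h"
    using lip[of "real k * h" "real (Suc k) * h"] Suc.prems h by (simp add: algebra_simps)
  moreover have "\<bar>zigzag f h a k - f (real k * h)\<bar> \<le> h"
    using Suc h by (simp add: algebra_simps)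
  ultimately show ?case by (auto simp del: of_nat_Suc)
qed

lemma zigzag_eq_kink_sum:
  "zigzag f h a k + of_int (zigzag_slope f h a k) * (x - real k * h)
     = a + (\<Sum>i\<le>k. of_int (zigzag_kink f h a i) * (x - real i * h))"
proof (induction k)
  case 0
  then show ?case by (simp add: zigzag_kink_def)
next
  case (Suc k)
  then show ?case
    unfolding zigzag_Suc_slope by (simp add: zigzag_kink_def algebra_simps)
qed

lemma relu_sum_zigzag_on_cell:
  assumes "k < n" "0 < h" "real k * h \<le> x" "x \<le> real (Suc k) * h"
  shows "a + relu_sum (zigzag_kink f h a) h n x
           = zigzag f h a k + of_int (zigzag_slope f h a k) * (x - real k * h)"
proof -
  let ?term = "\<lambda>i. of_int (zigzag_kink f h a i) * relu (x - real i * h)"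
  have "relu_sum (zigzag_kink f h a) h n x = (\<Sum>i\<le>k. ?term i)"
    unfolding relu_sum_def
  proof (rule sum.mono_neutral_right)
    show "\<forall>i\<in>{..<n} - {..k}. ?term i = 0"
    proof
      fix i assume "i \<in> {..<n} - {..k}"
      then have "real (Suc k) * h \<le> real i * h" using assms(2) by (intro mult_right_mono) auto
      then show "?term i = 0" using assms(4) by (simp add: relu_def)
    qed
  qed (use assms(1) in auto)
  also have "\<dots> = (\<Sum>i\<le>k. of_int (zigzag_kink f h a i) * (x - real i * h))"
  proof (rule sum.cong)
    fix i assume "i \<in> {..k}"
    then have "real i * h \<le> real k * h" using assms(2) by (intro mult_right_mono) auto
    then show "?term i = of_int (zigzag_kink f h a i) * (x - real i * h)"
      using assms(3) by (simp add: relu_def)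
  qed simp
  finally show ?thesis using zigzag_eq_kink_sum by simp
qed

lemma relu_sum_zigzag_approx:
  assumes lip: "\<And>x y. 0 \<le> y \<Longrightarrow> y \<le> x \<Longrightarrow> x \<le> 1 \<Longrightarrow> \<bar>f x - f y\<bar> \<le> x - y"
    and n: "0 < n" and h: "h = 1 / real n" and start: "\<bar>a - f 0\<bar> \<le> h"
    and x: "0 \<le> x" "x \<le> 1"
  shows "\<bar>a + relu_sum (zigzag_kink f h a) h n x - f x\<bar> \<le> 3 * h"
proof -
  have h_pos: "0 < h" using n h by simp
  define k where "k = min (nat \<lfloor>x * real n\<rfloor>) (n - 1)"
  have "k < n" using n by (simp add: k_def)
  have lower: "real k * h \<le> x"
  proof -
    have "real k \<le> real (nat \<lfloor>x * real n\<rfloor>)" by (simp add: k_def)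
    also have "\<dots> \<le> x * real n" using x by simp
    finally have "real k \<le> x * real n" .
    then show ?thesis using n unfolding h by (simp add: pos_divide_le_eq)
  qed
  have upper: "x \<le> real (Suc k) * h"
  proof (cases "nat \<lfloor>x * real n\<rfloor> \<le> n - 1")
    case True
    then have "x * real n \<le> real (Suc k)" unfolding k_def using x by linarith
    then show ?thesis using n unfolding h by (simp add: pos_le_divide_eq del: of_nat_Suc)
  next
    case False
    then have "real (Suc k) = real n" using n by (simp add: k_def)
    then show ?thesis using x n h by simp
  qed
  have grid: "\<bar>zigzag f h a k - f (real k * h)\<bar> \<le> h"
    using zigzag_close_on_grid[OF lip h_pos start] lower x by simp
  have "\<bar>f x - f (real k * h)\<bar> \<le> x - real k * h"
    using lip lower x h_pos by simp
  then have cell: "\<bar>f x - f (real k * h)\<bar> \<le> h"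
    using upper by (simp add: algebra_simps)
  have slope: "\<bar>of_int (zigzag_slope f h a k) * (x - real k * h)\<bar> \<le> h"
    using lower upper by (auto simp: zigzag_slope_def algebra_simps)
  show ?thesis
    using relu_sum_zigzag_on_cell[OF \<open>k < n\<close> h_pos lower upper, where a = a and f = f] grid cell slope by linarith
qed

lemma relu_of_nonneg [simp]: "0 \<le> x \<Longrightarrow> relu x = x"
  by (simp add: relu_def)

lemma relu_nonneg: "0 \<le> relu x"
  by (simp add: relu_def)

lemma relu_relu_minus: "0 \<le> b \<Longrightarrow> relu (relu a - b) = relu (a - b)"
  by (simp add: relu_def)

definition mk_layer ::
  "nat \<Rightarrow> nat \<Rightarrow> (nat \<Rightarrow> nat \<Rightarrow> bool) \<Rightarrow> (nat \<Rightarrow> nat \<Rightarrow> real) \<Rightarrow> (nat \<Rightarrow> bool) \<Rightarrow> (nat \<Rightarrow> real) \<Rightarrow> relu_layer"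
  where "mk_layer a b P w Q c =
    \<lparr>l_in = a, l_out = b, l_W = (\<lambda>j i. if P j i then Some (w j i) else None),
     l_b = (\<lambda>j. if Q j then Some (c j) else None)\<rparr>"

lemma mk_layer_simps [simp]:
  "l_in (mk_layer a b P w Q c) = a"
  "l_out (mk_layer a b P w Q c) = b"
  "l_W (mk_layer a b P w Q c) j i = (if P j i then Some (w j i) else None)"
  "l_b (mk_layer a b P w Q c) j = (if Q j then Some (c j) else None)"
  by (simp_all add: mk_layer_def)

lemma layer_apply_mk_layer:
  assumes "j < b"
  shows "layer_apply (mk_layer a b P w Q c) v j
           = (\<Sum>i\<in>{i. i < a \<and> P j i}. w j i * v i) + (if Q j then c j else 0)"
proof -
  have "(\<Sum>i\<in>{i. i < a \<and> P j i}. w j i * v i) = (\<Sum>i\<in>{i\<in>{..<a}. P j i}. w j i * v i)"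
    by (rule sum.cong) auto
  also have "\<dots> = (\<Sum>i<a. if P j i then w j i * v i else 0)"
    by (rule sum.inter_filter) simp
  finally show ?thesis using assms unfolding layer_apply_def by (auto intro!: sum.cong)
qed

definition hidden_layer_apply :: "relu_layer \<Rightarrow> (nat \<Rightarrow> real) \<Rightarrow> (nat \<Rightarrow> real)" where
  "hidden_layer_apply L v = (\<lambda>j. relu (layer_apply L v j))"

fun hidden_eval :: "relu_net \<Rightarrow> (nat \<Rightarrow> real) \<Rightarrow> (nat \<Rightarrow> real)" where
  "hidden_eval [] v = v"
| "hidden_eval (L # N) v = hidden_eval N (hidden_layer_apply L v)"

lemma hidden_eval_append [simp]: "hidden_eval (M @ N) v = hidden_eval N (hidden_eval M v)"
  by (induction M arbitrary: v) auto

lemma net_eval_append: "N \<noteq> [] \<Longrightarrow> net_eval (M @ N) v = net_eval N (hidden_eval M v)"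
proof (induction M arbitrary: v)
  case (Cons L M)
  then show ?case by (cases "M @ N") (auto simp: hidden_layer_apply_def)
qed simp

text \<open>
  In the tree stage units \<open>i < 2\<^sup>l\<close> hold
  \<open>relu (x - i h)\<close> and the units \<open>n, n + 1\<close> both hold \<open>2\<^sup>l\<^sup>-\<^sup>1\<close>, so that the shift \<open>h 2\<^sup>l\<close> is
  realised with the weight \<open>-h\<close> alone. Afterwards units \<open>0\<close>--\<open>3\<close> carry the positive and
  negative parts of the relu sum, with a second copy for the coefficients \<open>\<plusminus>2\<close>, and unit
  \<open>4\<close> is the constant \<open>1\<close>, which injects one bit of the offset per doubling layer.
\<close>

definition input_layer :: "nat \<Rightarrow> real \<Rightarrow> relu_layer" where
  "input_layer n h = mk_layer 1 (n + 2) (\<lambda>j i. j = 0 \<or> j = 1) (\<lambda>j i. 1)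
     (\<lambda>j. j = 1 \<or> j = n \<or> j = n + 1) (\<lambda>j. if j = 1 then -h else 1)"

definition tree_layer :: "nat \<Rightarrow> real \<Rightarrow> nat \<Rightarrow> relu_layer" where
  "tree_layer n h l = mk_layer (n + 2) (n + 2)
     (\<lambda>j i. j < 2^Suc l \<and> (i = j mod 2^l \<or> (i = n \<or> i = n + 1) \<and> 2^l \<le> j)
            \<or> (j = n \<or> j = n + 1) \<and> (i = n \<or> i = n + 1))
     (\<lambda>j i. if j < 2^Suc l \<and> i \<noteq> j mod 2^l then -h else 1) (\<lambda>j. False) (\<lambda>j. 0)"

definition split_layer :: "nat \<Rightarrow> (nat \<Rightarrow> int) \<Rightarrow> relu_layer" where
  "split_layer n t = mk_layer (n + 2) (n + 2)
     (\<lambda>j i. i < n \<and> (j = 0 \<and> 1 \<le> t i \<or> j = 1 \<and> 2 \<le> t i \<or> j = 2 \<and> t i \<le> -1 \<or> j = 3 \<and> t i \<le> -2))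
     (\<lambda>j i. 1) (\<lambda>j. j = 4) (\<lambda>j. 1)"

definition merge_layer :: "nat \<Rightarrow> bool \<Rightarrow> relu_layer" where
  "merge_layer n b = mk_layer (n + 2) (n + 2)
     (\<lambda>j i. (j = 0 \<or> j = 1) \<and> (i = 2 \<or> i = 3 \<or> i = 4 \<and> b) \<or> j = 2 \<and> (i = 0 \<or> i = 1))
     (\<lambda>j i. 1) (\<lambda>j. j = 4) (\<lambda>j. 1)"

definition double_layer :: "nat \<Rightarrow> bool \<Rightarrow> relu_layer" where
  "double_layer n b = mk_layer (n + 2) (n + 2)
     (\<lambda>j i. (j = 0 \<or> j = 1) \<and> (i = 0 \<or> i = 1 \<or> i = 4 \<and> b) \<or> j = 2 \<and> i = 2)
     (\<lambda>j i. 1) (\<lambda>j. j = 4) (\<lambda>j. 1)"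

definition output_layer :: "nat \<Rightarrow> real \<Rightarrow> relu_layer" where
  "output_layer n h = mk_layer (n + 2) 1 (\<lambda>j i. i = 0 \<or> i = 2) (\<lambda>j i. if i = 0 then -h else 1)
     (\<lambda>j. True) (\<lambda>j. 1)"

definition tree_invariant :: "nat \<Rightarrow> real \<Rightarrow> real \<Rightarrow> nat \<Rightarrow> (nat \<Rightarrow> real) \<Rightarrow> bool" where
  "tree_invariant n h x l v \<longleftrightarrow>
     (\<forall>j<2^l. v j = relu (x - real j * h)) \<and> v n = 2^(l - 1) \<and> v (n + 1) = 2^(l - 1)"

lemma input_layer_tree_invariant:
  assumes "8 \<le> n" "0 \<le> x"
  shows "tree_invariant n h x 1 (hidden_layer_apply (input_layer n h) (\<lambda>i. if i = 0 then x else 0))"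
proof -
  let ?v = "\<lambda>i. if i = 0 then x else (0::real)"
  let ?u = "hidden_layer_apply (input_layer n h) ?v"
  have inputs: "{i. i < (1::nat) \<and> (j = 0 \<or> j = 1)} = (if j = 0 \<or> j = 1 then {0} else {})" for j
    by auto
  have "?u 0 = relu x" "?u 1 = relu (x - h)" "?u n = 1" "?u (n + 1) = 1"
    using assms unfolding hidden_layer_apply_def input_layer_def
    by (subst layer_apply_mk_layer; auto simp: inputs)+
  then show ?thesis unfolding tree_invariant_def by (auto simp: less_2_cases_iff)
qed

lemma tree_layer_tree_invariant:
  assumes l: "1 \<le> l" "2^Suc l \<le> n" and h: "0 \<le> h" and inv: "tree_invariant n h x l v"
  shows "tree_invariant n h x (Suc l) (hidden_layer_apply (tree_layer n h l) v)"
proof -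
  let ?u = "hidden_layer_apply (tree_layer n h l) v"
  let ?inputs = "\<lambda>j. {i. i < n + 2 \<and> (j < 2^Suc l \<and> (i = j mod 2^l \<or> (i = n \<or> i = n + 1) \<and> 2^l \<le> j)
                                      \<or> (j = n \<or> j = n + 1) \<and> (i = n \<or> i = n + 1))}"
  have v_features: "\<And>j. j < 2^l \<Longrightarrow> v j = relu (x - real j * h)"
    and v_const: "v n = 2^(l - 1)" "v (n + 1) = 2^(l - 1)"
    using inv unfolding tree_invariant_def by auto
  have "(2::nat)^l < 2^Suc l" by simp
  have features: "?u j = relu (x - real j * h)" if j: "j < 2^Suc l" for j
  proof (cases "j < 2^l")
    case True
    have "j < n" using j l by linarith
    then have "?inputs j = {j}" using True j by auto
    then have "layer_apply (tree_layer n h l) v j = v j"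
      unfolding tree_layer_def using \<open>j < n\<close> True by (subst layer_apply_mk_layer) simp_all
    then show ?thesis using v_features[OF True] unfolding hidden_layer_apply_def by (simp add: relu_nonneg)
  next
    case False
    define p where "p = j mod 2^l"
    have p: "p < 2^l" "j = p + 2^l" using False j unfolding p_def by (auto simp: le_mod_geq)
    have "p < n" "j < n" using p j l \<open>(2::nat)^l < 2^Suc l\<close> by linarith+
    then have "?inputs j = {p, n, n + 1}" using j False unfolding p_def[symmetric] by auto
    then have "layer_apply (tree_layer n h l) v j = v p - h * v n - h * v (n + 1)"
      unfolding tree_layer_def using \<open>p < n\<close> \<open>j < n\<close> j by (subst layer_apply_mk_layer) (simp_all add: p_def)
    also have "\<dots> = relu (x - real p * h) - h * 2^l"
      using v_features[OF p(1)] v_const l by (cases l) (auto simp: algebra_simps)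
    finally have "?u j = relu (relu (x - real p * h) - h * 2^l)"
      unfolding hidden_layer_apply_def by simp
    also have "\<dots> = relu (x - real j * h)"
      using h p by (simp add: relu_relu_minus algebra_simps)
    finally show ?thesis .
  qed
  have const: "?u j = 2^l" if j: "j = n \<or> j = n + 1" for j
  proof -
    have "\<not> j < 2^Suc l" using j l by auto
    then have "?inputs j = {n, n + 1}" using j by auto
    then have "layer_apply (tree_layer n h l) v j = v n + v (n + 1)"
      unfolding tree_layer_def using \<open>\<not> j < 2^Suc l\<close> j by (subst layer_apply_mk_layer) auto
    also have "\<dots> = 2^l" using v_const l by (cases l) auto
    finally show ?thesis unfolding hidden_layer_apply_def by simp
  qed
  show ?thesis unfolding tree_invariant_def using features const by auto
qed

lemma tree_layers_tree_invariant:
  assumes "tree_invariant n h x 1 v" "0 \<le> h" "2^m \<le> n"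
  shows "1 \<le> l \<Longrightarrow> l \<le> m \<Longrightarrow> tree_invariant n h x l (hidden_eval (map (tree_layer n h) [1..<l]) v)"
proof (induction l)
  case (Suc l)
  show ?case
  proof (cases "l = 0")
    case True
    then show ?thesis using assms by simp
  next
    case False
    have "2^Suc l \<le> (2::nat)^m" using Suc.prems by (intro power_increasing) auto
    then show ?thesis
      using Suc False assms tree_layer_tree_invariant[of l n h x] by simp
  qed
qed simp

definition partial_relu_sum :: "nat \<Rightarrow> real \<Rightarrow> real \<Rightarrow> (nat \<Rightarrow> bool) \<Rightarrow> real" where
  "partial_relu_sum n h x Q = (\<Sum>i\<in>{i. i < n \<and> Q i}. relu (x - real i * h))"

lemma partial_relu_sum_nonneg: "0 \<le> partial_relu_sum n h x Q"
  unfolding partial_relu_sum_def by (rule sum_nonneg) (simp add: relu_nonneg)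

lemma partial_relu_sum_eq_sum_if:
  "partial_relu_sum n h x Q = (\<Sum>i<n. if Q i then relu (x - real i * h) else 0)"
proof -
  have "partial_relu_sum n h x Q = (\<Sum>i\<in>{i\<in>{..<n}. Q i}. relu (x - real i * h))"
    unfolding partial_relu_sum_def by (rule sum.cong) auto
  also have "\<dots> = (\<Sum>i<n. if Q i then relu (x - real i * h) else 0)"
    by (rule sum.inter_filter) simp
  finally show ?thesis .
qed

lemma relu_sum_eq_partial_relu_sums:
  assumes "\<And>i. t i \<in> {-2, -1, 0, 1, 2}"
  shows "relu_sum t h n x
           = (partial_relu_sum n h x (\<lambda>i. 1 \<le> t i) + partial_relu_sum n h x (\<lambda>i. 2 \<le> t i))
             - (partial_relu_sum n h x (\<lambda>i. t i \<le> -1) + partial_relu_sum n h x (\<lambda>i. t i \<le> -2))"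
  unfolding relu_sum_def partial_relu_sum_eq_sum_if sum.distrib[symmetric] sum_subtractf[symmetric]
proof (rule sum.cong)
  fix i
  have "t i = -2 \<or> t i = -1 \<or> t i = 0 \<or> t i = 1 \<or> t i = 2" using assms[of i] by auto
  then show "of_int (t i) * relu (x - real i * h)
      = (if 1 \<le> t i then relu (x - real i * h) else 0) + (if 2 \<le> t i then relu (x - real i * h) else 0)
        - ((if t i \<le> -1 then relu (x - real i * h) else 0) + (if t i \<le> -2 then relu (x - real i * h) else 0))"
    by (elim disjE) auto
qed simp

lemma split_layer_apply:
  assumes "8 \<le> n" and v: "\<And>i. i < n \<Longrightarrow> v i = relu (x - real i * h)"
  shows "hidden_layer_apply (split_layer n t) v 0 = partial_relu_sum n h x (\<lambda>i. 1 \<le> t i)"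
    "hidden_layer_apply (split_layer n t) v 1 = partial_relu_sum n h x (\<lambda>i. 2 \<le> t i)"
    "hidden_layer_apply (split_layer n t) v 2 = partial_relu_sum n h x (\<lambda>i. t i \<le> -1)"
    "hidden_layer_apply (split_layer n t) v 3 = partial_relu_sum n h x (\<lambda>i. t i \<le> -2)"
    "hidden_layer_apply (split_layer n t) v 4 = 1"
proof -
  have sum_v: "(\<Sum>i\<in>{i. i < n + 2 \<and> i < n \<and> Q i}. 1 * v i) = partial_relu_sum n h x Q" for Q
  proof -
    have "{i. i < n + 2 \<and> i < n \<and> Q i} = {i. i < n \<and> Q i}" by auto
    then show ?thesis unfolding partial_relu_sum_def using v by (auto intro!: sum.cong)
  qed
  note unfold = hidden_layer_apply_def split_layer_def
  show "hidden_layer_apply (split_layer n t) v 0 = partial_relu_sum n h x (\<lambda>i. 1 \<le> t i)"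
    "hidden_layer_apply (split_layer n t) v 1 = partial_relu_sum n h x (\<lambda>i. 2 \<le> t i)"
    "hidden_layer_apply (split_layer n t) v 2 = partial_relu_sum n h x (\<lambda>i. t i \<le> -1)"
    "hidden_layer_apply (split_layer n t) v 3 = partial_relu_sum n h x (\<lambda>i. t i \<le> -2)"
    "hidden_layer_apply (split_layer n t) v 4 = 1"
    unfolding unfold using assms sum_v partial_relu_sum_nonneg
    by (subst layer_apply_mk_layer; auto)+
qed

lemma merge_layer_apply:
  assumes "8 \<le> n" "0 \<le> v 0" "0 \<le> v 1" "0 \<le> v 2" "0 \<le> v 3" "v 4 = 1"
  shows "hidden_layer_apply (merge_layer n b) v 0 = v 2 + v 3 + of_bool b"
    "hidden_layer_apply (merge_layer n b) v 1 = v 2 + v 3 + of_bool b"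
    "hidden_layer_apply (merge_layer n b) v 2 = v 0 + v 1"
    "hidden_layer_apply (merge_layer n b) v 4 = 1"
proof -
  have inputs: "{i. i < Suc (Suc n) \<and> (i = 2 \<or> i = 3 \<or> i = 4)} = {2, 3, 4}"
    "{i. i < Suc (Suc n) \<and> (i = 2 \<or> i = 3)} = {2, 3}"
    "{i. i < Suc (Suc n) \<and> (i = 0 \<or> i = Suc 0)} = {0, 1}"
    using assms(1) by auto
  show "hidden_layer_apply (merge_layer n b) v 0 = v 2 + v 3 + of_bool b"
    "hidden_layer_apply (merge_layer n b) v 1 = v 2 + v 3 + of_bool b"
    "hidden_layer_apply (merge_layer n b) v 2 = v 0 + v 1"
    "hidden_layer_apply (merge_layer n b) v 4 = 1"
    unfolding hidden_layer_apply_def merge_layer_def using assms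
    by (subst layer_apply_mk_layer; auto simp: inputs)+
qed

lemma double_layer_apply:
  assumes "8 \<le> n" "0 \<le> v 0" "v 1 = v 0" "0 \<le> v 2" "v 4 = 1"
  shows "hidden_layer_apply (double_layer n b) v 0 = 2 * v 0 + of_bool b"
    "hidden_layer_apply (double_layer n b) v 1 = 2 * v 0 + of_bool b"
    "hidden_layer_apply (double_layer n b) v 2 = v 2"
    "hidden_layer_apply (double_layer n b) v 4 = 1"
proof -
  have inputs: "{i. i < Suc (Suc n) \<and> (i = 0 \<or> i = Suc 0 \<or> i = 4)} = {0, 1, 4}"
    "{i. i < Suc (Suc n) \<and> (i = 0 \<or> i = Suc 0)} = {0, 1}"
    "{i. i < Suc (Suc n) \<and> i = 2} = {2}"
    using assms(1) by auto
  show "hidden_layer_apply (double_layer n b) v 0 = 2 * v 0 + of_bool b"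
    "hidden_layer_apply (double_layer n b) v 1 = 2 * v 0 + of_bool b"
    "hidden_layer_apply (double_layer n b) v 2 = v 2"
    "hidden_layer_apply (double_layer n b) v 4 = 1"
    unfolding hidden_layer_apply_def double_layer_def using assms
    by (subst layer_apply_mk_layer; auto simp: inputs)+
qed

lemma output_layer_apply:
  assumes "8 \<le> n"
  shows "layer_apply (output_layer n h) v 0 = v 2 - h * v 0 + 1"
proof -
  have "{i. i < Suc (Suc n) \<and> (i = 0 \<or> i = 2)} = {0, 2}" using assms by auto
  then show ?thesis unfolding output_layer_def by (subst layer_apply_mk_layer) auto
qed

lemma double_plus_next_bit:
  fixes K :: nat
  assumes "i < m"
  shows "2 * (K div 2^(m - i)) + of_bool (odd (K div 2^(m - Suc i))) = K div 2^(m - Suc i)"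
proof -
  have "m - i = Suc (m - Suc i)" using assms by simp
  then have "K div 2^(m - i) = K div (2^(m - Suc i) * 2)"
    by (simp add: mult.commute)
  then have "K div 2^(m - i) = K div 2^(m - Suc i) div 2"
    by (simp add: div_mult2_eq)
  then show ?thesis by (simp add: of_bool_odd_eq_mod_2 mult_div_mod_eq)
qed

lemma double_layers_eval:
  assumes "8 \<le> n" "0 \<le> S" "0 \<le> w 2" "w 0 = S + real (K div 2^m)" "w 1 = w 0" "w 4 = 1"
  shows "i \<le> m \<Longrightarrow>
    (let z = hidden_eval (map (\<lambda>i. double_layer n (odd (K div 2^(m - Suc i)))) [0..<i]) w in
     z 0 = 2^i * S + real (K div 2^(m - i)) \<and> z 1 = z 0 \<and> z 2 = w 2 \<and> z 4 = 1)"
proof (induction i)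
  case (Suc i)
  define z where "z = hidden_eval (map (\<lambda>i. double_layer n (odd (K div 2^(m - Suc i)))) [0..<i]) w"
  have z: "z 0 = 2^i * S + real (K div 2^(m - i))" "z 1 = z 0" "z 2 = w 2" "z 4 = 1"
    using Suc unfolding z_def Let_def by auto
  have "0 \<le> z 0" using z assms by simp
  have "real (2 * (K div 2^(m - i)) + of_bool (odd (K div 2^(m - Suc i)))) = real (K div 2^(m - Suc i))"
    using double_plus_next_bit[of i m K] Suc.prems by simp
  moreover have "hidden_eval (map (\<lambda>i. double_layer n (odd (K div 2^(m - Suc i)))) [0..<Suc i]) w
      = hidden_layer_apply (double_layer n (odd (K div 2^(m - Suc i)))) z"
    unfolding z_def by simp
  ultimately show ?case
    using double_layer_apply[OF assms(1) \<open>0 \<le> z 0\<close> z(2) _ z(4), of "odd (K div 2^(m - Suc i))"] z assms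
    unfolding Let_def by (simp add: algebra_simps)
qed (use assms in simp)

definition relu_sum_hidden_layers :: "nat \<Rightarrow> real \<Rightarrow> (nat \<Rightarrow> int) \<Rightarrow> nat \<Rightarrow> relu_net" where
  "relu_sum_hidden_layers m h t K =
     input_layer (2^m) h # map (tree_layer (2^m) h) [1..<m]
     @ [split_layer (2^m) t, merge_layer (2^m) (odd (K div 2^m))]
     @ map (\<lambda>i. double_layer (2^m) (odd (K div 2^(m - Suc i)))) [0..<m]"

definition relu_sum_net :: "nat \<Rightarrow> real \<Rightarrow> (nat \<Rightarrow> int) \<Rightarrow> nat \<Rightarrow> relu_net" where
  "relu_sum_net m h t K = relu_sum_hidden_layers m h t K @ [output_layer (2^m) h]"

lemma net_fun_relu_sum_net:
  assumes m: "3 \<le> m" and h: "h * 2^m = 1" and t: "\<And>i. t i \<in> {-2, -1, 0, 1, 2}"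
    and x: "0 \<le> x" and K: "K < 2 * 2^m"
  shows "net_fun (relu_sum_net m h t K) x = 1 - h * real K + relu_sum t h (2^m) x"
proof -
  define n where "n = (2::nat)^m"
  have "(2::nat)^3 \<le> 2^m" by (rule power_increasing[OF m]) simp
  then have n8: "8 \<le> n" unfolding n_def by simp
  have "h = 1 / 2^m" using h by (simp add: eq_divide_eq)
  then have "0 \<le> h" by simp
  define v0 where "v0 = (\<lambda>i::nat. if i = 0 then x else (0::real))"
  define v where "v = hidden_eval (map (tree_layer n h) [1..<m]) (hidden_layer_apply (input_layer n h) v0)"
  have "tree_invariant n h x m v"
    unfolding v_def v0_def
    using tree_layers_tree_invariant[OF input_layer_tree_invariant[OF n8 x] \<open>0 \<le> h\<close>, of m m] m n_def
    by auto
  then have features: "\<And>i. i < n \<Longrightarrow> v i = relu (x - real i * h)"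
    unfolding tree_invariant_def n_def by auto
  define u where "u = hidden_layer_apply (split_layer n t) v"
  note u = split_layer_apply[OF n8 features, of t, folded u_def]
  define P where "P = partial_relu_sum n h x (\<lambda>i. 1 \<le> t i) + partial_relu_sum n h x (\<lambda>i. 2 \<le> t i)"
  define S where "S = partial_relu_sum n h x (\<lambda>i. t i \<le> -1) + partial_relu_sum n h x (\<lambda>i. t i \<le> -2)"
  have "0 \<le> S" "0 \<le> P" unfolding S_def P_def by (simp_all add: partial_relu_sum_nonneg add_nonneg_nonneg)
  define w where "w = hidden_layer_apply (merge_layer n (odd (K div 2^m))) u"
  have "K div 2^m < 2" using K by (simp add: div_less_iff_less_mult)
  then have "of_bool (odd (K div 2^m)) = real (K div 2^m)"
    by (metis of_bool_odd_eq_mod_2 mod_less of_nat_of_bool)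
  then have w: "w 0 = S + real (K div 2^m)" "w 1 = w 0" "w 2 = P" "w 4 = 1"
    using merge_layer_apply[OF n8, of u "odd (K div 2^m)"] u partial_relu_sum_nonneg
    unfolding w_def S_def P_def by (auto simp: algebra_simps)
  define z where "z = hidden_eval (map (\<lambda>i. double_layer n (odd (K div 2^(m - Suc i)))) [0..<m]) w"
  have z: "z 0 = 2^m * S + real K" "z 2 = P"
    using double_layers_eval[OF n8 \<open>0 \<le> S\<close> _ w(1,2,4), of m] w(3) \<open>0 \<le> P\<close> unfolding z_def Let_def by auto
  have "hidden_eval (relu_sum_hidden_layers m h t K) v0 = z"
    unfolding relu_sum_hidden_layers_def z_def w_def u_def v_def n_def by simp
  then have "net_fun (relu_sum_net m h t K) x = layer_apply (output_layer n h) z 0"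
    unfolding net_fun_def relu_sum_net_def v0_def[symmetric] n_def by (subst net_eval_append) auto
  also have "\<dots> = P - h * 2^m * S - h * real K + 1"
    using output_layer_apply[OF n8, of h z] z by (simp add: algebra_simps)
  also have "\<dots> = 1 - h * real K + relu_sum t h (2^m) x"
    using relu_sum_eq_partial_relu_sums[OF t] h unfolding P_def S_def n_def by simp
  finally show ?thesis .
qed

definition layer_weight_pos :: "relu_layer \<Rightarrow> (nat \<times> nat) set" where
  "layer_weight_pos L = {(j, i). j < l_out L \<and> i < l_in L \<and> l_W L j i \<noteq> None}"

definition layer_bias_pos :: "relu_layer \<Rightarrow> nat set" where
  "layer_bias_pos L = {j. j < l_out L \<and> l_b L j \<noteq> None}"

definition layer_num_weights :: "relu_layer \<Rightarrow> nat" where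
  "layer_num_weights L = card (layer_weight_pos L) + card (layer_bias_pos L)"

lemma finite_layer_weight_pos: "finite (layer_weight_pos L)"
proof (rule finite_subset)
  show "layer_weight_pos L \<subseteq> {..<l_out L} \<times> {..<l_in L}"
    unfolding layer_weight_pos_def by auto
qed auto

lemma finite_layer_bias_pos: "finite (layer_bias_pos L)"
  unfolding layer_bias_pos_def by auto

lemma num_weights_le_sum_list: "num_weights N \<le> sum_list (map layer_num_weights N)"
proof -
  have weights: "weight_pos N = (\<Union>k<length N. (\<lambda>(j, i). (k, j, i)) ` layer_weight_pos (N ! k))"
    unfolding weight_pos_def layer_weight_pos_def by auto
  have biases: "bias_pos N = (\<Union>k<length N. Pair k ` layer_bias_pos (N ! k))"
    unfolding bias_pos_def layer_bias_pos_def by auto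
  have "card (weight_pos N) \<le> (\<Sum>k<length N. card ((\<lambda>(j, i). (k, j, i)) ` layer_weight_pos (N ! k)))"
    unfolding weights by (rule card_UN_le) simp
  also have "\<dots> \<le> (\<Sum>k<length N. card (layer_weight_pos (N ! k)))"
    by (rule sum_mono) (rule card_image_le[OF finite_layer_weight_pos])
  finally have "card (weight_pos N) \<le> (\<Sum>k<length N. card (layer_weight_pos (N ! k)))" .
  moreover have "card (bias_pos N) \<le> (\<Sum>k<length N. card (Pair k ` layer_bias_pos (N ! k)))"
    unfolding biases by (rule card_UN_le) simp
  moreover have "\<dots> \<le> (\<Sum>k<length N. card (layer_bias_pos (N ! k)))"
    by (rule sum_mono) (rule card_image_le[OF finite_layer_bias_pos])
  moreover have "sum_list (map layer_num_weights N) = (\<Sum>k<length N. layer_num_weights (N ! k))"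
    by (simp add: sum_list_sum_nth atLeast0LessThan)
  ultimately show ?thesis
    unfolding num_weights_def layer_num_weights_def sum.distrib by linarith
qed

lemma card_le_if_subset: "A \<subseteq> B \<Longrightarrow> finite B \<Longrightarrow> card B \<le> k \<Longrightarrow> card A \<le> k"
  using card_mono[of B A] by linarith

lemma card_insert3_le: "card {a, b, c} \<le> 3"
  by (auto simp: card_insert_if)

lemma layer_num_weights_input_layer: "layer_num_weights (input_layer n h) \<le> 5"
proof -
  have "layer_weight_pos (input_layer n h) \<subseteq> {(0, 0), (1, 0)}"
    unfolding layer_weight_pos_def input_layer_def by (auto split: if_splits)
  then have "card (layer_weight_pos (input_layer n h)) \<le> 2"
    by (rule card_le_if_subset) (auto simp: card_insert_if)
  moreover have "layer_bias_pos (input_layer n h) \<subseteq> {1, n, n + 1}"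
    unfolding layer_bias_pos_def input_layer_def by auto
  then have "card (layer_bias_pos (input_layer n h)) \<le> 3"
    by (rule card_le_if_subset) (auto simp: card_insert3_le)
  ultimately show ?thesis unfolding layer_num_weights_def by simp
qed

lemma layer_num_weights_tree_layer: "layer_num_weights (tree_layer n h l) \<le> 3 * 2^Suc l + 4"
proof -
  let ?tree = "\<Union>j<(2::nat)^Suc l. {j} \<times> {j mod 2^l, n, n + 1}"
  have "card ?tree \<le> (\<Sum>j<(2::nat)^Suc l. card ({j} \<times> {j mod 2^l, n, n + 1}))"
    by (rule card_UN_le) simp
  also have "\<dots> \<le> (\<Sum>j<(2::nat)^Suc l. 3)"
    by (rule sum_mono) (simp add: card_cartesian_product card_insert3_le)
  finally have "card ?tree \<le> 3 * 2^Suc l" by simp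
  moreover have "card ({n, n + 1} \<times> {n, n + 1}) \<le> 4" by (simp add: card_cartesian_product)
  ultimately have "card (?tree \<union> {n, n + 1} \<times> {n, n + 1}) \<le> 3 * 2^Suc l + 4"
    using card_Un_le[of ?tree "{n, n + 1} \<times> {n, n + 1}"] by linarith
  moreover have "layer_weight_pos (tree_layer n h l) \<subseteq> ?tree \<union> {n, n + 1} \<times> {n, n + 1}"
    unfolding layer_weight_pos_def tree_layer_def by auto
  ultimately have "card (layer_weight_pos (tree_layer n h l)) \<le> 3 * 2^Suc l + 4"
    using card_le_if_subset by blast
  moreover have "layer_bias_pos (tree_layer n h l) = {}"
    unfolding layer_bias_pos_def tree_layer_def by auto
  ultimately show ?thesis unfolding layer_num_weights_def by simp
qed

lemma layer_num_weights_split_layer: "layer_num_weights (split_layer n t) \<le> 4 * n + 1"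
proof -
  have "layer_weight_pos (split_layer n t) \<subseteq> {0, 1, 2, 3} \<times> {..<n}"
    unfolding layer_weight_pos_def split_layer_def by auto
  then have "card (layer_weight_pos (split_layer n t)) \<le> 4 * n"
    by (rule card_le_if_subset) (auto simp: card_cartesian_product)
  moreover have "layer_bias_pos (split_layer n t) \<subseteq> {4}"
    unfolding layer_bias_pos_def split_layer_def by auto
  then have "card (layer_bias_pos (split_layer n t)) \<le> 1"
    by (rule card_le_if_subset) auto
  ultimately show ?thesis unfolding layer_num_weights_def by simp
qed

lemma layer_num_weights_merge_layer: "layer_num_weights (merge_layer n b) \<le> 16"
proof -
  have "layer_weight_pos (merge_layer n b) \<subseteq> {0, 1, 2} \<times> {0, 1, 2, 3, 4}"
    unfolding layer_weight_pos_def merge_layer_def by auto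
  then have "card (layer_weight_pos (merge_layer n b)) \<le> 15"
    by (rule card_le_if_subset) (auto simp: card_cartesian_product)
  moreover have "layer_bias_pos (merge_layer n b) \<subseteq> {4}"
    unfolding layer_bias_pos_def merge_layer_def by auto
  then have "card (layer_bias_pos (merge_layer n b)) \<le> 1"
    by (rule card_le_if_subset) auto
  ultimately show ?thesis unfolding layer_num_weights_def by simp
qed

lemma layer_num_weights_double_layer: "layer_num_weights (double_layer n b) \<le> 16"
proof -
  have "layer_weight_pos (double_layer n b) \<subseteq> {0, 1, 2} \<times> {0, 1, 2, 3, 4}"
    unfolding layer_weight_pos_def double_layer_def by auto
  then have "card (layer_weight_pos (double_layer n b)) \<le> 15"
    by (rule card_le_if_subset) (auto simp: card_cartesian_product)
  moreover have "layer_bias_pos (double_layer n b) \<subseteq> {4}"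
    unfolding layer_bias_pos_def double_layer_def by auto
  then have "card (layer_bias_pos (double_layer n b)) \<le> 1"
    by (rule card_le_if_subset) auto
  ultimately show ?thesis unfolding layer_num_weights_def by simp
qed

lemma layer_num_weights_output_layer: "layer_num_weights (output_layer n h) \<le> 3"
proof -
  have "layer_weight_pos (output_layer n h) \<subseteq> {0} \<times> {0, 2}"
    unfolding layer_weight_pos_def output_layer_def by auto
  then have "card (layer_weight_pos (output_layer n h)) \<le> 2"
    by (rule card_le_if_subset) (auto simp: card_cartesian_product)
  moreover have "layer_bias_pos (output_layer n h) \<subseteq> {0}"
    unfolding layer_bias_pos_def output_layer_def by auto
  then have "card (layer_bias_pos (output_layer n h)) \<le> 1"
    by (rule card_le_if_subset) auto
  ultimately show ?thesis unfolding layer_num_weights_def by simp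
qed

lemma depth_relu_sum_net: "1 \<le> m \<Longrightarrow> depth (relu_sum_net m h t K) = 2 * m + 3"
  unfolding depth_def relu_sum_net_def relu_sum_hidden_layers_def by simp

lemma num_weights_relu_sum_net:
  assumes "3 \<le> m"
  shows "num_weights (relu_sum_net m h t K) \<le> 40 * 2^m"
proof -
  let ?n = "(2::nat)^m"
  let ?doubles = "map (\<lambda>i. double_layer ?n (odd (K div 2^(m - Suc i)))) [0..<m]"
  have "sum_list (map layer_num_weights (map (tree_layer ?n h) [1..<m]))
      \<le> sum_list (map (\<lambda>l. 3 * 2^Suc l + 4) [1..<m])"
    unfolding map_map comp_def
    by (rule sum_list_mono) (rule layer_num_weights_tree_layer)
  also have "\<dots> = (\<Sum>l\<in>{1..<m}. 3 * 2^Suc l + 4)"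
    by (simp add: interv_sum_list_conv_sum_set_nat)
  also have "\<dots> \<le> (\<Sum>l<m. 3 * 2^Suc l + 4)"
    by (rule sum_mono2) auto
  also have "\<dots> = 6 * (\<Sum>l<m. 2^l) + 4 * m"
    by (simp add: sum.distrib sum_distrib_left)
  also have "(\<Sum>l<m. 2^l) < (2::nat)^m"
    by (induction m) auto
  finally have tree: "sum_list (map layer_num_weights (map (tree_layer ?n h) [1..<m])) \<le> 6 * 2^m + 4 * m"
    by simp
  have "sum_list (map layer_num_weights ?doubles) \<le> sum_list (map (\<lambda>i. 16) [0..<m])"
    unfolding map_map comp_def by (rule sum_list_mono) (simp add: layer_num_weights_double_layer)
  then have doubles: "sum_list (map layer_num_weights ?doubles) \<le> 16 * m"
    by (simp add: sum_list_triv)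
  have "num_weights (relu_sum_net m h t K) \<le> sum_list (map layer_num_weights (relu_sum_net m h t K))"
    by (rule num_weights_le_sum_list)
  also have "\<dots> \<le> 5 + (6 * 2^m + 4 * m) + (4 * 2^m + 1) + 16 + 16 * m + 3"
    using layer_num_weights_input_layer[of ?n h] tree layer_num_weights_split_layer[of ?n t]
      layer_num_weights_merge_layer[of ?n "odd (K div 2^m)"] doubles layer_num_weights_output_layer[of ?n h]
    unfolding relu_sum_net_def relu_sum_hidden_layers_def by simp
  also have "\<dots> \<le> 40 * 2^m"
  proof -
    have "(2::nat)^3 \<le> 2^m" by (rule power_increasing[OF assms]) simp
    then show ?thesis using less_exp[of m] by linarith
  qed
  finally show ?thesis .
qed

lemma valid_net_Cons_append:
  assumes "l_in A = 1" "l_out A = w" "\<forall>L\<in>set M. l_in L = w \<and> l_out L = w" "l_in B = w" "l_out B = 1"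
  shows "valid_net (A # M @ [B])"
  unfolding valid_net_def
proof (intro conjI allI impI)
  fix k assume k: "Suc k < length (A # M @ [B])"
  have "l_out ((A # M @ [B]) ! k) = w"
    using assms k by (cases k) (auto simp: nth_append)
  moreover have "l_in ((A # M @ [B]) ! Suc k) = w"
    using assms k by (cases "k < length M") (auto simp: nth_append)
  ultimately show "l_out ((A # M @ [B]) ! k) = l_in ((A # M @ [B]) ! Suc k)" by simp
qed (use assms in auto)

lemma valid_net_relu_sum_net: "valid_net (relu_sum_net m h t K)"
proof -
  have "relu_sum_net m h t K = input_layer (2^m) h
     # (map (tree_layer (2^m) h) [1..<m] @ [split_layer (2^m) t, merge_layer (2^m) (odd (K div 2^m))]
        @ map (\<lambda>i. double_layer (2^m) (odd (K div 2^(m - Suc i)))) [0..<m])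
     @ [output_layer (2^m) h]"
    unfolding relu_sum_net_def relu_sum_hidden_layers_def by simp
  also have "valid_net \<dots>"
    by (rule valid_net_Cons_append[where w = "2^m + 2"])
      (auto simp: input_layer_def tree_layer_def split_layer_def merge_layer_def
        double_layer_def output_layer_def)
  finally show ?thesis .
qed

lemma weight_values_subset:
  assumes "\<forall>L\<in>set N. \<forall>j i w. l_W L j i = Some w \<longrightarrow> w \<in> V"
    "\<forall>L\<in>set N. \<forall>j c. l_b L j = Some c \<longrightarrow> c \<in> V"
  shows "weight_values N \<subseteq> V"
  unfolding weight_values_def weight_pos_def bias_pos_def
  using assms nth_mem by fastforce

lemma card_weight_values_relu_sum_net: "card (weight_values (relu_sum_net m h t K)) \<le> 2"
proof -
  have "weight_values (relu_sum_net m h t K) \<subseteq> {1, -h}"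
    by (rule weight_values_subset)
      (auto simp: relu_sum_net_def relu_sum_hidden_layers_def input_layer_def tree_layer_def
        split_layer_def merge_layer_def double_layer_def output_layer_def split: if_splits)
  then show ?thesis
    by (rule card_le_if_subset) (auto simp: card_insert_if)
qed

lemma dyadic_between:
  fixes \<epsilon> :: real
  assumes "0 < \<epsilon>" "\<epsilon> < 1"
  obtains c :: nat where "1 / \<epsilon> \<le> 2^c" "2^c \<le> 2 / \<epsilon>" "real c < log 2 (1 / \<epsilon>) + 1"
proof
  define L where "L = log 2 (1 / \<epsilon>)"
  have "0 < L" "2 powr L = 1 / \<epsilon>" unfolding L_def using assms by simp_all
  define c where "c = nat \<lceil>L\<rceil>"
  have c: "L \<le> real c" "real c < L + 1" unfolding c_def using \<open>0 < L\<close> by linarith+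
  have pow: "(2::real)^c = 2 powr real c" by (simp add: powr_realpow)
  show "1 / \<epsilon> \<le> 2^c"
    unfolding pow \<open>2 powr L = 1 / \<epsilon>\<close>[symmetric] using c by (intro powr_mono) auto
  have "(2::real) powr real c \<le> 2 powr (L + 1)" using c by (intro powr_mono) auto
  then show "2^c \<le> 2 / \<epsilon>" unfolding pow using \<open>2 powr L = 1 / \<epsilon>\<close> by (simp add: powr_add)
  show "real c < log 2 (1 / \<epsilon>) + 1" using c(2) by (simp add: L_def)
qed

lemma offset_grid_point:
  fixes y :: real
  assumes "0 < n" "\<bar>y\<bar> \<le> 1"
  obtains K :: nat where "K < 2 * n" "\<bar>1 - real K / real n - y\<bar> \<le> 1 / real n"
proof
  define j where "j = max (1 - int n) \<lfloor>real n * y\<rfloor>"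
  define K where "K = nat (int n - j)"
  have ny: "- real n \<le> real n * y" "real n * y \<le> real n"
    using mult_left_mono[of "-1" y "real n"] mult_left_mono[of y 1 "real n"] assms
    by (auto simp: abs_le_iff)
  then have "\<lfloor>real n * y\<rfloor> \<le> int n" by linarith
  then have "int K = int n - j" unfolding K_def j_def using assms by simp
  then have "int K < int (2 * n)" unfolding j_def by simp
  then show "K < 2 * n" by (simp only: of_nat_less_iff)
  have "\<bar>real_of_int j - real n * y\<bar> \<le> 1"
    unfolding j_def using ny by (cases "1 - int n \<le> \<lfloor>real n * y\<rfloor>") (simp_all, linarith+)
  moreover have "real K = real n - real_of_int j"
    using \<open>int K = int n - j\<close> by (metis of_int_diff of_int_of_nat_eq)
  then have "1 - real K / real n - y = (real_of_int j - real n * y) / real n"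
    using assms by (simp add: field_simps)
  ultimately show "\<bar>1 - real K / real n - y\<bar> \<le> 1 / real n"
    using assms by (simp add: abs_divide divide_right_mono)
qed

lemma relu_sum_net_zigzag_approx:
  assumes f: "F11 f" and m: "3 \<le> m" and h: "h = 1 / 2^m" and K: "K < 2 * 2^m"
    and start: "\<bar>1 - h * real K - f 0\<bar> \<le> h" and x: "0 \<le> x" "x \<le> 1"
  shows "\<bar>net_fun (relu_sum_net m h (zigzag_kink f h (1 - h * real K)) K) x - f x\<bar> \<le> 3 * h"
proof -
  let ?a = "1 - h * real K"
  have "net_fun (relu_sum_net m h (zigzag_kink f h ?a) K) x = ?a + relu_sum (zigzag_kink f h ?a) h (2^m) x"
    using net_fun_relu_sum_net[OF m _ zigzag_kink_range x(1) K] h by simp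
  also have "\<bar>\<dots> - f x\<bar> \<le> 3 * h"
    using relu_sum_zigzag_approx[OF F11_lipschitz[OF f] _ _ start x] h by simp
  finally show ?thesis .
qed

lemma relu_net_two_weight_values:
  assumes f: "F11 f" and \<epsilon>: "0 < \<epsilon>" "\<epsilon> < 1"
  obtains N where "valid_net N" "card (weight_values N) \<le> 2"
    "\<forall>x\<in>{0..1}. \<bar>net_fun N x - f x\<bar> \<le> \<epsilon>"
    "real (depth N) \<le> 2 * log 2 (1 / \<epsilon>) + 11" "real (num_weights N) \<le> 640 / \<epsilon>"
proof -
  obtain c where c: "1 / \<epsilon> \<le> 2^c" "2^c \<le> 2 / \<epsilon>" "real c < log 2 (1 / \<epsilon>) + 1"
    using dyadic_between[OF \<epsilon>] .
  define m where "m = c + 3"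
  define h :: real where "h = 1 / 2^m"
  have "(2::real)^m = 8 * 2^c" unfolding m_def by (simp add: power_add)
  then have "8 / \<epsilon> \<le> 2^m" "2^m \<le> 16 / \<epsilon>" using c \<epsilon> by (simp_all add: field_simps)
  then have "3 * h \<le> \<epsilon>" unfolding h_def using \<epsilon> by (simp add: field_simps)
  have "\<bar>f 0\<bar> \<le> 1" using f unfolding F11_def by auto
  then obtain K where K: "K < 2 * 2^m" "\<bar>1 - h * real K - f 0\<bar> \<le> h"
    using offset_grid_point[of "2^m" "f 0"] unfolding h_def by auto
  define N where "N = relu_sum_net m h (zigzag_kink f h (1 - h * real K)) K"
  have "\<forall>x\<in>{0..1}. \<bar>net_fun N x - f x\<bar> \<le> \<epsilon>"
    using relu_sum_net_zigzag_approx[OF f _ h_def K] \<open>3 * h \<le> \<epsilon>\<close> unfolding N_def m_def by force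
  moreover have "real (depth N) \<le> 2 * log 2 (1 / \<epsilon>) + 11"
    unfolding N_def using depth_relu_sum_net[of m] c(3) by (simp add: m_def)
  moreover have "num_weights N \<le> 40 * 2^m"
    unfolding N_def by (rule num_weights_relu_sum_net) (simp add: m_def)
  then have "real (num_weights N) \<le> real (40 * 2^m)"
    by (simp only: of_nat_le_iff)
  then have "real (num_weights N) \<le> 640 / \<epsilon>"
    using \<open>2^m \<le> 16 / \<epsilon>\<close> by simp
  ultimately show ?thesis
    using that[of N] valid_net_relu_sum_net card_weight_values_relu_sum_net unfolding N_def by auto
qed

lemma log_bounds_dominated:
  fixes lam :: nat and \<epsilon> D W :: real
  assumes lam: "2 \<le> lam" and \<epsilon>: "0 < \<epsilon>" "\<epsilon> < 1/4"
    and D: "D \<le> 2 * log 2 (1 / \<epsilon>) + 11" and W: "W \<le> 640 / \<epsilon>"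
  shows "D \<le> 1000 * (real lam * (log 2 (log 2 (1 / \<epsilon>))) powr (1 / (real lam - 1)) + log 2 (1 / \<epsilon>))"
    and "W \<le> 1000 * (real lam * (log 2 (log 2 (1 / \<epsilon>))) powr (1 / (real lam - 1) + 1) + 1 / \<epsilon>)"
    and "W * log 2 (real lam)
           \<le> 1000 * (log 2 (real lam) * (real lam * (log 2 (log 2 (1 / \<epsilon>))) powr (1 / (real lam - 1) + 1) + 1 / \<epsilon>))"
proof -
  have "2 < 1 / \<epsilon>" using \<epsilon> by (simp add: field_simps)
  then have "1 < log 2 (1 / \<epsilon>)" using \<epsilon> by (simp add: less_log_iff)
  then show "D \<le> 1000 * (real lam * (log 2 (log 2 (1 / \<epsilon>))) powr (1 / (real lam - 1)) + log 2 (1 / \<epsilon>))"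
    using D by (simp add: distrib_left add_increasing)
  have "640 / \<epsilon> \<le> 1000 * (1 / \<epsilon>)" using \<epsilon> by (simp add: divide_right_mono)
  then show W': "W \<le> 1000 * (real lam * (log 2 (log 2 (1 / \<epsilon>))) powr (1 / (real lam - 1) + 1) + 1 / \<epsilon>)"
    using W by (simp add: distrib_left add_increasing)
  have "0 \<le> log 2 (real lam)" using lam by simp
  with W' show "W * log 2 (real lam)
      \<le> 1000 * (log 2 (real lam) * (real lam * (log 2 (log 2 (1 / \<epsilon>))) powr (1 / (real lam - 1) + 1) + 1 / \<epsilon>))"
    by (metis mult_right_mono mult.commute mult.left_commute)
qed

theorem theorem3:
  shows "\<exists>C \<epsilon>0::real. C > 0 \<and> 0 < \<epsilon>0 \<and> \<epsilon>0 < 1 \<and>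
    (\<forall>lam::nat. lam \<ge> 2 \<longrightarrow>
      (\<forall>f. F11 f \<longrightarrow>
        (\<forall>\<epsilon>::real. 0 < \<epsilon> \<and> \<epsilon> < 1 \<longrightarrow>
          (\<exists>N. valid_net N \<and> card (weight_values N) \<le> lam \<and>
               (\<forall>x\<in>{0..1}. \<bar>net_fun N x - f x\<bar> \<le> \<epsilon>) \<and>
               (\<epsilon> < \<epsilon>0 \<longrightarrow>
                  real (depth N) \<le> C * (real lam * (log 2 (log 2 (1/\<epsilon>))) powr (1 / (real lam - 1))
                                         + log 2 (1/\<epsilon>)) \<and>
                  real (num_weights N) \<le> C * (real lam * (log 2 (log 2 (1/\<epsilon>))) powr (1 / (real lam - 1) + 1)
                                         + 1/\<epsilon>) \<and>
                  storage_bits lam N \<le> C * (log 2 (real lam) *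
                      (real lam * (log 2 (log 2 (1/\<epsilon>))) powr (1 / (real lam - 1) + 1) + 1/\<epsilon>)))))))"
proof (rule exI[of _ "1000::real"], rule exI[of _ "1/4::real"], intro conjI allI impI)
  fix lam :: nat and f and \<epsilon> :: real
  assume lam: "2 \<le> lam" and f: "F11 f" and \<epsilon>: "0 < \<epsilon> \<and> \<epsilon> < 1"
  obtain N where N: "valid_net N" "card (weight_values N) \<le> 2" "\<forall>x\<in>{0..1}. \<bar>net_fun N x - f x\<bar> \<le> \<epsilon>"
    and depth: "real (depth N) \<le> 2 * log 2 (1 / \<epsilon>) + 11" and weights: "real (num_weights N) \<le> 640 / \<epsilon>"
    using relu_net_two_weight_values[OF f] \<epsilon> by blast
  show "\<exists>N. valid_net N \<and> card (weight_values N) \<le> lam \<and>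
      (\<forall>x\<in>{0..1}. \<bar>net_fun N x - f x\<bar> \<le> \<epsilon>) \<and>
      (\<epsilon> < 1/4 \<longrightarrow>
         real (depth N) \<le> 1000 * (real lam * (log 2 (log 2 (1/\<epsilon>))) powr (1 / (real lam - 1))
                                 + log 2 (1/\<epsilon>)) \<and>
         real (num_weights N) \<le> 1000 * (real lam * (log 2 (log 2 (1/\<epsilon>))) powr (1 / (real lam - 1) + 1)
                                       + 1/\<epsilon>) \<and>
         storage_bits lam N \<le> 1000 * (log 2 (real lam) *
             (real lam * (log 2 (log 2 (1/\<epsilon>))) powr (1 / (real lam - 1) + 1) + 1/\<epsilon>)))"
    using N lam log_bounds_dominated[OF lam _ _ depth weights] \<epsilon>
    by (intro exI[of _ N]) (auto simp: storage_bits_def)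
qed simp_all

end
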